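(* Let $\mathcal{W}=\{W_1,\dots,W_N\}$ be a finite set of $d\times k$ real matrices, let $\mathcal{V}$ be a linear subspace of $\mathbb{S}^d$, and let $\mathcal{C}(\mathcal{W})^*=\{\sum_{i=1}^NW_iX_iW_i^T: X_i\in\mathbb{S}^k_+\}$. Consider the semidefinite program in the variables $X\in\mathbb{S}^d$, $X_i,T_i\in\mathbb{S}^k$: $$\text{maximize }\sum_{i=1}^N\operatorname{trace}T_i\ \text{ subject to } X\in\mathcal{V},\ X=\sum_{i=1}^NW_iX_iW_i^T,\ X_i\succeq T_i,\ I\succeq T_i\succeq 0\ (i=1,\dots,N).$$ For any optimal solution $(X,X_i,T_i)$ of this program, $X\in\mathcal{V}\cap\mathcal{C}(\mathcal{W})^*$ and $\operatorname{rank}X\ge\operatorname{rank}Y$ for all $Y\in\mathcal{V}\cap\mathcal{C}(\mathcal{W})^*$.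
   Context: $\mathbb{S}^d$ denotes real symmetric $d\times d$ matrices, $\mathbb{S}^k_+$ the cone of positive semidefinite $k\times k$ matrices, and $A\succeq B$ means $A-B$ is positive semidefinite. *)

theory Defs
  imports "HOL-Analysis.Analysis"
begin

definition sym_mat :: "real^'n^'n \<Rightarrow> bool" where
  "sym_mat A \<longleftrightarrow> transpose A = A"

definition psd :: "real^'n^'n \<Rightarrow> bool" where
  "psd A \<longleftrightarrow> sym_mat A \<and> (\<forall>v. 0 \<le> v \<bullet> (A *v v))"

definition C_dual :: "(nat \<Rightarrow> real^'k^'d) \<Rightarrow> nat \<Rightarrow> (real^'d^'d) set" where
  "C_dual W N = {Y. \<exists>Xs :: nat \<Rightarrow> real^'k^'k. (\<forall>i<N. psd (Xs i)) \<and>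
      Y = (\<Sum>i<N. W i ** Xs i ** transpose (W i))}"

definition sdp_feasible ::
  "(nat \<Rightarrow> real^'k^'d) \<Rightarrow> nat \<Rightarrow> (real^'d^'d) set \<Rightarrow>
   real^'d^'d \<Rightarrow> (nat \<Rightarrow> real^'k^'k) \<Rightarrow> (nat \<Rightarrow> real^'k^'k) \<Rightarrow> bool" where
  "sdp_feasible W N V X Xs Ts \<longleftrightarrow>
     sym_mat X \<and> X \<in> V \<and> X = (\<Sum>i<N. W i ** Xs i ** transpose (W i)) \<and>
     (\<forall>i<N. sym_mat (Xs i) \<and> sym_mat (Ts i) \<and>
            psd (Xs i - Ts i) \<and> psd (mat 1 - Ts i) \<and> psd (Ts i))"

definition sdp_objective :: "nat \<Rightarrow> (nat \<Rightarrow> real^'k^'k) \<Rightarrow> real" where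
  "sdp_objective N Ts = (\<Sum>i<N. trace (Ts i))"

definition sdp_optimal ::
  "(nat \<Rightarrow> real^'k^'d) \<Rightarrow> nat \<Rightarrow> (real^'d^'d) set \<Rightarrow>
   real^'d^'d \<Rightarrow> (nat \<Rightarrow> real^'k^'k) \<Rightarrow> (nat \<Rightarrow> real^'k^'k) \<Rightarrow> bool" where
  "sdp_optimal W N V X Xs Ts \<longleftrightarrow> sdp_feasible W N V X Xs Ts \<and>
     (\<forall>X' Xs' Ts'. sdp_feasible W N V X' Xs' Ts' \<longrightarrow>
        sdp_objective N Ts' \<le> sdp_objective N Ts)"

end

theory Submission
  imports Defs
begin

text \<open>Let \<open>(X, X\<^sub>i, T\<^sub>i)\<close> be optimal and \<open>Y = \<Sum> W\<^sub>i Y\<^sub>i W\<^sub>i\<^sup>T \<in> \<V>\<close>. If some \<open>v\<close> had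
  \<open>X\<^sub>i v = 0\<close> but \<open>Y\<^sub>i v \<noteq> 0\<close>, project \<open>v\<close> onto the range of \<open>Z = X\<^sub>i + Y\<^sub>i\<close>: this gives
  \<open>u \<noteq> 0\<close> with \<open>X\<^sub>i u = T\<^sub>i u = 0\<close> and \<open>\<epsilon> u u\<^sup>T \<preceq> Z\<close>. Replacing \<open>X, X\<^sub>i\<close> by \<open>2X + Y, 2X\<^sub>i + Y\<^sub>i\<close>
  and \<open>T\<^sub>i\<close> by \<open>T\<^sub>i + \<epsilon> u u\<^sup>T\<close> stays feasible and raises the objective, a contradiction.
  Hence \<open>ker X\<^sub>i \<subseteq> ker Y\<^sub>i\<close> for every \<open>i\<close>, so \<open>ker X \<subseteq> ker Y\<close>, and for symmetric matrices
  this means \<open>range Y \<subseteq> range X\<close>.\<close>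

lemma sym_mat_add: "sym_mat A \<Longrightarrow> sym_mat B \<Longrightarrow> sym_mat (A + B)"
  by (simp add: sym_mat_def transpose_def vec_eq_iff)

lemma sym_mat_diff: "sym_mat A \<Longrightarrow> sym_mat B \<Longrightarrow> sym_mat (A - B)"
  by (simp add: sym_mat_def transpose_def vec_eq_iff)

lemma sym_mat_inner: "sym_mat A \<Longrightarrow> x \<bullet> (A *v y) = (A *v x) \<bullet> y"
  by (metis dot_lmul_matrix sym_mat_def transpose_matrix_vector)

lemma psd_add: "psd A \<Longrightarrow> psd B \<Longrightarrow> psd (A + B)"
  by (simp add: psd_def sym_mat_add matrix_vector_mult_add_rdistrib inner_add_right)

lemma psd_diff_psd: "psd (A - B) \<Longrightarrow> psd B \<Longrightarrow> psd A"
  using psd_add[of "A - B" B] by simp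

lemma psd_cauchy_schwarz:
  assumes "psd A"
  shows "(x \<bullet> (A *v y))\<^sup>2 \<le> (x \<bullet> (A *v x)) * (y \<bullet> (A *v y))"
proof -
  have sym: "sym_mat A" and nonneg: "\<And>v. 0 \<le> v \<bullet> (A *v v)"
    using assms by (auto simp: psd_def)
  define a b c where "a = y \<bullet> (A *v y)" and "b = x \<bullet> (A *v y)" and "c = x \<bullet> (A *v x)"
  have "y \<bullet> (A *v x) = b"
    unfolding b_def using sym_mat_inner[OF sym, of y x] by (simp add: inner_commute)
  then have quadratic: "0 \<le> c + 2 * t * b + t\<^sup>2 * a" for t
    using nonneg[of "x + t *\<^sub>R y"]
    by (simp add: matrix_vector_right_distrib matrix_vector_mult_scaleR inner_add_left
        inner_add_right a_def c_def b_def[symmetric] power2_eq_square algebra_simps)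
  have "b\<^sup>2 \<le> c * a"
  proof (cases "a = 0")
    case True
    show ?thesis
    proof (cases "b = 0")
      case False
      with True quadratic[of "- (c + 1) / (2 * b)"] show ?thesis by (simp add: field_simps)
    qed (use True in simp)
  next
    case False
    with nonneg[of y] have "a > 0" by (simp add: a_def)
    with quadratic[of "- b / a"] show ?thesis by (simp add: field_simps power2_eq_square)
  qed
  then show ?thesis by (simp add: a_def b_def c_def mult.commute)
qed

lemma psd_quadratic_form_eq_0:
  assumes "psd A" "x \<bullet> (A *v x) = 0"
  shows "A *v x = 0"
proof -
  have "((A *v x) \<bullet> (A *v x))\<^sup>2 \<le> ((A *v x) \<bullet> (A *v (A *v x))) * (x \<bullet> (A *v x))"
    by (rule psd_cauchy_schwarz[OF assms(1)])
  with assms(2) show ?thesis by simp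
qed

lemma psd_add_kernel:
  assumes "psd A" "psd B"
  shows "(A + B) *v x = 0 \<longleftrightarrow> A *v x = 0 \<and> B *v x = 0"
proof
  assume "(A + B) *v x = 0"
  then have "x \<bullet> (A *v x) + x \<bullet> (B *v x) = 0"
    by (metis inner_add_right inner_zero_right matrix_vector_mult_add_rdistrib)
  moreover have "0 \<le> x \<bullet> (A *v x)" "0 \<le> x \<bullet> (B *v x)"
    using assms by (auto simp: psd_def)
  ultimately show "A *v x = 0 \<and> B *v x = 0"
    using assms psd_quadratic_form_eq_0 by (metis add_nonneg_eq_0_iff)
qed (simp add: matrix_vector_mult_add_rdistrib)

lemma psd_le_kernel:
  assumes "psd (A - B)" "psd B" "A *v x = 0"
  shows "B *v x = 0"
proof -
  have "0 \<le> x \<bullet> ((A - B) *v x)" "0 \<le> x \<bullet> (B *v x)"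
    using assms(1,2) by (auto simp: psd_def)
  with assms(3) have "x \<bullet> (B *v x) = 0"
    by (simp add: matrix_vector_mult_diff_rdistrib inner_diff_right)
  with assms(2) show ?thesis by (rule psd_quadratic_form_eq_0)
qed

lemma sym_mat_range_eq_orthogonal_comp_kernel:
  assumes "sym_mat A"
  shows "range ((*v) A) = {x. A *v x = 0}\<^sup>\<bottom>"
proof -
  have "adjoint ((*v) A) = (*v) A"
    using adjoint_matrix[of A] assms by (metis sym_mat_def)
  then have "{x. A *v x = 0} = (range ((*v) A))\<^sup>\<bottom>"
    using ker_orthogonal_comp_adjoint[of "(*v) A"] by (simp add: vimage_def)
  then show ?thesis
    by (simp add: orthogonal_comp_self linear_subspace_image)
qed

lemma rank_le_if_kernel_subset:
  assumes "sym_mat A" "sym_mat B" "{x. A *v x = 0} \<subseteq> {x. B *v x = 0}"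
  shows "rank B \<le> rank A"
proof -
  have "range ((*v) B) \<subseteq> range ((*v) A)"
    using orthogonal_comp_anti_mono[OF assms(3)]
    by (simp add: sym_mat_range_eq_orthogonal_comp_kernel[OF assms(1)]
        sym_mat_range_eq_orthogonal_comp_kernel[OF assms(2)])
  then show ?thesis by (simp add: rank_dim_range dim_subset)
qed

text \<open>If \<open>A\<close> annihilates \<open>v\<close> but \<open>B\<close> does not, the component of \<open>v\<close> orthogonal to
  \<open>ker (A + B) = ker A \<inter> ker B\<close> has the same property and lies in the range of \<open>A + B\<close>.\<close>

lemma psd_separating_vector_in_range:
  assumes "psd A" "psd B" "A *v v = 0" "B *v v \<noteq> 0"
  obtains u where "u \<in> range ((*v) (A + B))" "A *v u = 0" "B *v u \<noteq> 0"
proof -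
  define K where "K = {x. (A + B) *v x = 0}"
  have "subspace K"
    by (simp add: K_def subspace_def matrix_vector_right_distrib matrix_vector_mult_scaleR)
  obtain p u where "p \<in> span K" and orth: "\<And>w. w \<in> span K \<Longrightarrow> orthogonal u w" and "v = p + u"
    using orthogonal_subspace_decomp_exists[of K v] by metis
  then have "p \<in> K" using \<open>subspace K\<close> by (metis span_eq_iff)
  then have "A *v p = 0" "B *v p = 0"
    using psd_add_kernel[OF assms(1,2)] by (auto simp: K_def)
  with \<open>v = p + u\<close> assms(3,4) have "A *v u = 0" "B *v u \<noteq> 0"
    by (auto simp: matrix_vector_right_distrib)
  moreover have "u \<in> K\<^sup>\<bottom>"
    using orth span_superset by (auto simp: orthogonal_comp_def orthogonal_commute)
  then have "u \<in> range ((*v) (A + B))"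
    using sym_mat_range_eq_orthogonal_comp_kernel[of "A + B"] psd_add[OF assms(1,2)]
    by (simp add: K_def psd_def)
  ultimately show ?thesis using that by blast
qed

definition outer :: "real^'n \<Rightarrow> real^'n^'n" where
  "outer u = (\<chi> i j. u$i * u$j)"

lemma outer_mult_vector: "outer u *v w = (u \<bullet> w) *\<^sub>R u"
  by (simp add: outer_def matrix_vector_mult_def vec_eq_iff inner_vec_def sum_distrib_left mult_ac)

lemma inner_outer_mult_vector: "w \<bullet> (outer u *v w) = (u \<bullet> w)\<^sup>2"
  by (simp add: outer_mult_vector power2_eq_square inner_commute)

lemma sym_mat_outer: "sym_mat (outer u)"
  by (simp add: sym_mat_def outer_def transpose_def vec_eq_iff mult.commute)

lemma psd_outer: "psd (outer u)"
  by (simp add: psd_def sym_mat_outer inner_outer_mult_vector)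

lemma trace_outer: "trace (outer u) = u \<bullet> u"
  by (simp add: trace_def outer_def inner_vec_def)

lemma psd_diff_outer_iff:
  assumes "sym_mat B"
  shows "psd (B - outer u) \<longleftrightarrow> (\<forall>w. (u \<bullet> w)\<^sup>2 \<le> w \<bullet> (B *v w))"
  using assms
  by (simp add: psd_def sym_mat_diff sym_mat_outer matrix_vector_mult_diff_rdistrib
      inner_diff_right inner_outer_mult_vector)

lemma psd_diff_small_outer:
  assumes "psd B" "u \<in> range ((*v) B)"
  obtains s where "s > 0" "s\<^sup>2 * (u \<bullet> u) \<le> 1" "psd (B - outer (s *\<^sub>R u))"
proof -
  obtain a where u: "u = B *v a" using assms(2) by auto
  define c where "c = a \<bullet> (B *v a)"
  have "c \<ge> 0" using assms(1) by (simp add: psd_def c_def)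
  have bound: "(u \<bullet> w)\<^sup>2 \<le> c * (w \<bullet> (B *v w))" for w
    using psd_cauchy_schwarz[OF assms(1), of a w] sym_mat_inner[of B a w] assms(1)
    by (simp add: u c_def psd_def inner_commute)
  define s where "s = 1 / (1 + norm u + c)"
  have pos: "1 + norm u + c > 0" using \<open>c \<ge> 0\<close> by (simp add: add_pos_nonneg)
  then have "s > 0" by (simp add: s_def)
  have "c \<le> (1 + norm u + c)\<^sup>2" "u \<bullet> u \<le> (1 + norm u + c)\<^sup>2"
    using \<open>c \<ge> 0\<close> by (simp_all add: power2_eq_square algebra_simps power2_norm_eq_inner[symmetric])
  moreover have "(1 + norm u + c)\<^sup>2 > 0" using pos by simp
  ultimately have "s\<^sup>2 * c \<le> 1" "s\<^sup>2 * (u \<bullet> u) \<le> 1"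
    by (simp_all add: s_def power_divide divide_le_eq)
  have "((s *\<^sub>R u) \<bullet> w)\<^sup>2 \<le> w \<bullet> (B *v w)" for w
  proof -
    have "0 \<le> w \<bullet> (B *v w)" using assms(1) by (simp add: psd_def)
    have "((s *\<^sub>R u) \<bullet> w)\<^sup>2 = s\<^sup>2 * (u \<bullet> w)\<^sup>2" by (simp add: power_mult_distrib)
    also have "\<dots> \<le> (s\<^sup>2 * c) * (w \<bullet> (B *v w))"
      using mult_left_mono[OF bound[of w], of "s\<^sup>2"] by simp
    also have "\<dots> \<le> w \<bullet> (B *v w)"
      using mult_right_mono[OF \<open>s\<^sup>2 * c \<le> 1\<close> \<open>0 \<le> w \<bullet> (B *v w)\<close>] by simp
    finally show ?thesis .
  qed
  then have "psd (B - outer (s *\<^sub>R u))"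
    using psd_diff_outer_iff[of B] assms(1) psd_def by blast
  with \<open>s > 0\<close> \<open>s\<^sup>2 * (u \<bullet> u) \<le> 1\<close> show ?thesis by (rule that)
qed

lemma psd_id_minus_add_outer:
  assumes "psd (mat 1 - T)" "T *v u = 0" "u \<bullet> u \<le> 1"
  shows "psd (mat 1 - (T + outer u))"
proof -
  define B where "B = mat 1 - T"
  have Bu: "B *v u = u" using assms(2) by (simp add: B_def matrix_vector_mult_diff_rdistrib)
  have "(u \<bullet> w)\<^sup>2 \<le> w \<bullet> (B *v w)" for w
  proof -
    have "u \<bullet> w = u \<bullet> (B *v w)"
      using sym_mat_inner[of B u w] assms(1) Bu by (simp add: B_def psd_def)
    then have "(u \<bullet> w)\<^sup>2 \<le> (u \<bullet> u) * (w \<bullet> (B *v w))"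
      using psd_cauchy_schwarz[of B u w] assms(1) Bu by (simp add: B_def)
    also have "\<dots> \<le> w \<bullet> (B *v w)"
      using assms(1,3) by (simp add: B_def psd_def mult_left_le_one_le)
    finally show ?thesis .
  qed
  then have "psd (B - outer u)"
    using psd_diff_outer_iff[of B] assms(1) psd_def B_def by blast
  then show ?thesis by (simp add: B_def diff_diff_eq)
qed

lemma matrix_add_rdistrib: "(A + B) ** C = A ** C + B ** C"
  by (simp add: vec_eq_iff matrix_matrix_mult_def sum.distrib algebra_simps)

lemma matrix_mult_sum_vector: "(\<Sum>i\<in>S. f i) *v x = (\<Sum>i\<in>S. f i *v x)"
  by (induction S rule: infinite_finite_induct) (auto simp: matrix_vector_mult_add_rdistrib)

lemma congruence_mult_vector:
  "(W ** A ** transpose W) *v w = W *v (A *v (transpose W *v w))"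
  by (simp only: matrix_vector_mul_assoc matrix_mul_assoc)

lemma psd_congruence_sum_kernel:
  fixes W :: "nat \<Rightarrow> real^'k^'d"
  assumes "\<forall>i<N. psd (A i)"
  shows "(\<Sum>i<N. W i ** A i ** transpose (W i)) *v w = 0 \<longleftrightarrow>
    (\<forall>i<N. A i *v (transpose (W i) *v w) = 0)"
proof
  define q where "q i = (transpose (W i) *v w) \<bullet> (A i *v (transpose (W i) *v w))" for i
  have q_nonneg: "\<And>i. i \<in> {..<N} \<Longrightarrow> 0 \<le> q i" using assms by (simp add: q_def psd_def)
  assume "(\<Sum>i<N. W i ** A i ** transpose (W i)) *v w = 0"
  then have "w \<bullet> ((\<Sum>i<N. W i ** A i ** transpose (W i)) *v w) = 0" by simp
  then have "(\<Sum>i<N. q i) = 0"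
    by (simp add: matrix_mult_sum_vector inner_sum_right congruence_mult_vector q_def
        dot_lmul_matrix[symmetric])
  then have "\<forall>i<N. q i = 0" using sum_nonneg_eq_0_iff[of "{..<N}" q] q_nonneg by simp
  then show "\<forall>i<N. A i *v (transpose (W i) *v w) = 0"
    using assms psd_quadratic_form_eq_0 unfolding q_def by blast
qed (simp add: matrix_mult_sum_vector congruence_mult_vector)

lemma sdp_feasible_Xs_psd: "sdp_feasible W N V X Xs Ts \<Longrightarrow> i < N \<Longrightarrow> psd (Xs i)"
  unfolding sdp_feasible_def by (blast intro: psd_diff_psd)

lemma sdp_feasible_in_C_dual: "sdp_feasible W N V X Xs Ts \<Longrightarrow> X \<in> C_dual W N"
  using sdp_feasible_Xs_psd unfolding C_dual_def sdp_feasible_def by blast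

lemma sdp_feasible_perturb:
  fixes W :: "nat \<Rightarrow> real^'k^'d"
  assumes feas: "sdp_feasible W N V X Xs Ts" and V: "subspace V" "\<forall>A\<in>V. sym_mat A"
    and Y: "Y \<in> V" "Y = (\<Sum>j<N. W j ** Ys j ** transpose (W j))" "\<forall>j<N. psd (Ys j)"
    and i: "i < N" and u: "Ts i *v u = 0" "u \<bullet> u \<le> 1" "psd (Xs i + Ys i - outer u)"
  shows "sdp_feasible W N V (X + X + Y) (\<lambda>j. Xs j + Xs j + Ys j) (Ts(i := Ts i + outer u))"
proof -
  define Xs' where "Xs' = (\<lambda>j. Xs j + Xs j + Ys j)"
  define Ts' where "Ts' = Ts(i := Ts i + outer u)"
  have "X \<in> V" and Xeq: "X = (\<Sum>j<N. W j ** Xs j ** transpose (W j))"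
    using feas unfolding sdp_feasible_def by blast+
  then have "X + X + Y \<in> V" using subspace_add[OF V(1)] Y(1) by blast
  moreover have "X + X + Y = (\<Sum>j<N. W j ** Xs' j ** transpose (W j))"
    unfolding Xeq Y(2) Xs'_def by (simp only: matrix_add_ldistrib matrix_add_rdistrib sum.distrib)
  moreover have psd_j: "psd (Xs' j - Ts' j) \<and> psd (mat 1 - Ts' j) \<and> psd (Ts' j)"
    if "j < N" for j
  proof -
    have XT: "psd (Xs j - Ts j)" and IT: "psd (mat 1 - Ts j)" and T: "psd (Ts j)"
      using feas that unfolding sdp_feasible_def by blast+
    have X: "psd (Xs j)" and Y: "psd (Ys j)"
      using feas Y(3) that sdp_feasible_Xs_psd by auto
    have "psd (Xs' j - Ts' j)"
    proof (cases "j = i")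
      case True
      have eq: "Xs' j - Ts' j = (Xs j - Ts j) + (Xs j + Ys j - outer u)"
        using True by (simp add: Xs'_def Ts'_def algebra_simps)
      from True u(3) have "psd (Xs j + Ys j - outer u)" by simp
      then show ?thesis unfolding eq by (rule psd_add[OF XT])
    next
      case False
      have eq: "Xs' j - Ts' j = (Xs j - Ts j) + (Xs j + Ys j)"
        using False by (simp add: Xs'_def Ts'_def algebra_simps)
      show ?thesis unfolding eq by (rule psd_add[OF XT psd_add[OF X Y]])
    qed
    moreover have "psd (mat 1 - Ts' j)" "psd (Ts' j)"
      using IT T u psd_id_minus_add_outer[OF IT] by (auto simp: Ts'_def intro: psd_add psd_outer)
    ultimately show ?thesis by blast
  qed
  moreover have "sym_mat (Xs' j) \<and> sym_mat (Ts' j)" if "j < N" for j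
    using psd_j[OF that] psd_diff_psd by (auto simp: psd_def)
  ultimately show ?thesis
    using V(2) unfolding sdp_feasible_def Xs'_def Ts'_def by blast
qed

lemma sdp_objective_add_outer:
  "i < N \<Longrightarrow> sdp_objective N (Ts(i := Ts i + outer u)) = sdp_objective N Ts + u \<bullet> u"
proof -
  assume "i < N"
  have "trace ((Ts(i := Ts i + outer u)) j) = trace (Ts j) + (if j = i then u \<bullet> u else 0)" for j
    by (simp add: trace_add trace_outer)
  with \<open>i < N\<close> show ?thesis by (simp add: sdp_objective_def sum.distrib)
qed

lemma sdp_optimal_component_kernel_subset:
  fixes W :: "nat \<Rightarrow> real^'k^'d"
  assumes V: "subspace V" "\<forall>A\<in>V. sym_mat A" and opt: "sdp_optimal W N V X Xs Ts"
    and Y: "Y \<in> V" "Y = (\<Sum>j<N. W j ** Ys j ** transpose (W j))" "\<forall>j<N. psd (Ys j)"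
    and i: "i < N" and v: "Xs i *v v = 0"
  shows "Ys i *v v = 0"
proof (rule ccontr)
  assume "Ys i *v v \<noteq> 0"
  have feas: "sdp_feasible W N V X Xs Ts" using opt by (simp add: sdp_optimal_def)
  then have Xi: "psd (Xs i)" and XTi: "psd (Xs i - Ts i)" and Ti: "psd (Ts i)"
    using i sdp_feasible_Xs_psd unfolding sdp_feasible_def by blast+
  have Yi: "psd (Ys i)" using Y(3) i by simp
  obtain u where u: "u \<in> range ((*v) (Xs i + Ys i))" "Xs i *v u = 0" "Ys i *v u \<noteq> 0"
    using psd_separating_vector_in_range[OF Xi Yi v \<open>Ys i *v v \<noteq> 0\<close>] .
  obtain s where s: "s > 0" "s\<^sup>2 * (u \<bullet> u) \<le> 1" "psd (Xs i + Ys i - outer (s *\<^sub>R u))"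
    using psd_diff_small_outer[OF psd_add[OF Xi Yi] u(1)] .
  have "Ts i *v (s *\<^sub>R u) = 0"
    using psd_le_kernel[OF XTi Ti u(2)] by (simp add: matrix_vector_mult_scaleR)
  then have "sdp_feasible W N V (X + X + Y) (\<lambda>j. Xs j + Xs j + Ys j)
      (Ts(i := Ts i + outer (s *\<^sub>R u)))"
    using sdp_feasible_perturb[OF feas V Y i] s by (simp add: power2_eq_square)
  then have "sdp_objective N (Ts(i := Ts i + outer (s *\<^sub>R u))) \<le> sdp_objective N Ts"
    using opt unfolding sdp_optimal_def by blast
  then have "(s *\<^sub>R u) \<bullet> (s *\<^sub>R u) \<le> 0" by (simp add: sdp_objective_add_outer[OF i])
  moreover have "s *\<^sub>R u \<noteq> 0" using s(1) u(3) by auto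
  ultimately show False by (metis inner_gt_zero_iff not_le)
qed

lemma sdp_optimal_kernel_subset:
  fixes W :: "nat \<Rightarrow> real^'k^'d"
  assumes V: "subspace V" "\<forall>A\<in>V. sym_mat A" and opt: "sdp_optimal W N V X Xs Ts"
    and "Y \<in> V" "Y \<in> C_dual W N"
  shows "{x. X *v x = 0} \<subseteq> {x. Y *v x = 0}"
proof
  have feas: "sdp_feasible W N V X Xs Ts" using opt by (simp add: sdp_optimal_def)
  then have Xeq: "X = (\<Sum>j<N. W j ** Xs j ** transpose (W j))"
    unfolding sdp_feasible_def by blast
  obtain Ys where Y: "\<forall>j<N. psd (Ys j)" "Y = (\<Sum>j<N. W j ** Ys j ** transpose (W j))"
    using \<open>Y \<in> C_dual W N\<close> by (auto simp: C_dual_def)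
  fix w assume "w \<in> {x. X *v x = 0}"
  then have "\<forall>j<N. Xs j *v (transpose (W j) *v w) = 0"
    using psd_congruence_sum_kernel[of N Xs W w] sdp_feasible_Xs_psd[OF feas] Xeq by auto
  then have "\<forall>j<N. Ys j *v (transpose (W j) *v w) = 0"
    using sdp_optimal_component_kernel_subset[OF V opt \<open>Y \<in> V\<close> Y(2,1)] by blast
  then show "w \<in> {x. Y *v x = 0}" using psd_congruence_sum_kernel[of N Ys W w] Y by simp
qed

theorem corollary2:
  fixes W :: "nat \<Rightarrow> real^'k^'d" and N :: nat
    and V :: "(real^'d^'d) set"
    and X :: "real^'d^'d" and Xs Ts :: "nat \<Rightarrow> real^'k^'k"
  assumes "subspace V" and "\<forall>A\<in>V. sym_mat A"
    and "sdp_optimal W N V X Xs Ts"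
  shows "X \<in> V \<inter> C_dual W N \<and> (\<forall>Y\<in>V \<inter> C_dual W N. rank Y \<le> rank X)"
proof -
  have feas: "sdp_feasible W N V X Xs Ts" using assms(3) by (simp add: sdp_optimal_def)
  then have XV: "X \<in> V" unfolding sdp_feasible_def by blast
  have "rank Y \<le> rank X" if "Y \<in> V" "Y \<in> C_dual W N" for Y
    using rank_le_if_kernel_subset sdp_optimal_kernel_subset[OF assms that] assms(2) XV \<open>Y \<in> V\<close>
    by blast
  with XV sdp_feasible_in_C_dual[OF feas] show ?thesis by blast
qed

end
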